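(* Let $n\ge 1$. There exists a listing $\pi_0,\pi_1,\ldots,\pi_{n!-1}$ of all permutations of $\{1,2,\ldots,n\}$ (written as words) such that consecutive permutations $\pi_i,\pi_{i+1}$ differ by interchanging the symbols in two adjacent positions, and $\pi_{i+n!/2}$ is the reversal of $\pi_i$ for all $0\le i<n!/2$, if and only if $n\le 4$ or $n\equiv 0,1 \pmod 4$.
   Context: The reversal of a word $a_1a_2\cdots a_n$ is $a_na_{n-1}\cdots a_1$. Such a listing is called a reverse (adjacent interchange) Gray code for permutations of $12\ldots n$. *)

theory Defs
  imports "HOL-Combinatorics.Multiset_Permutations"
begin

definition adj_swap :: "nat \<Rightarrow> 'a list \<Rightarrow> 'a list" where
  "adj_swap j w = w[j := w ! Suc j, Suc j := w ! j]"

definition adj_interchange :: "'a list \<Rightarrow> 'a list \<Rightarrow> bool" where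
  "adj_interchange u v \<longleftrightarrow> (\<exists>j. Suc j < length u \<and> v = adj_swap j u)"

definition reverse_adj_gray_code :: "nat \<Rightarrow> nat list list \<Rightarrow> bool" where
  "reverse_adj_gray_code n L \<longleftrightarrow>
     length L = fact n \<and> distinct L \<and> set L = permutations_of_set {1..n} \<and>
     (\<forall>i. Suc i < length L \<longrightarrow> adj_interchange (L ! i) (L ! Suc i)) \<and>
     (\<forall>i < fact n div 2. L ! (i + fact n div 2) = rev (L ! i))"

end

(*
  Necessity: an adjacent interchange changes the parity of the number of inversions, and a
  permutation of {1..n} and its reversal have n(n-1)/2 inversions together. For n >= 4 the
  entries pi_0 and pi_{n!/2} = rev pi_0 are an even number of interchanges apart, so
  n(n-1)/2 is even, i.e. n = 0 or 1 (mod 4).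

  Sufficiency: n <= 5 is checked by evaluation, and codes for m = 0 (mod 4), m >= 4, extend to
  codes for m + 4 and m + 5. The new listing consists of one block per word p of the old
  listing, obtained by filling p into the blanks of a Gray code of patterns over the new
  letters and m blanks. Consecutive blocks meet in a pattern whose blanks are contiguous, so
  the interchange turning p into its successor is still an adjacent interchange. The pattern
  codes used for the second half of the old listing are the reversals of those used for the
  first half, which makes the second half of the new listing the reversal of the first. The
  pattern codes come from short explicit chains, built by sweeping new letters over Gray codes
  of two-letter patterns, and lengthened by alternately repeating the last code and its
  reversal.
*)

theory Submission
  imports Defs
begin

lemma successively_distinct:
  "distinct xs \<Longrightarrow> successively P xs \<Longrightarrow> successively (\<lambda>x y. P x y \<and> x \<noteq> y) xs"
  by (induction xs rule: induct_list012) auto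

lemma successively_map_upt:
  "(\<And>k. i \<le> k \<Longrightarrow> Suc k < n \<Longrightarrow> R (f k) (f (Suc k))) \<Longrightarrow> successively R (map f [i..<n])"
  unfolding successively_map successively_conv_nth by simp

lemma successively_concat:
  "\<forall>xs\<in>set xss. xs \<noteq> [] \<and> successively R xs \<Longrightarrow> successively (\<lambda>xs ys. R (last xs) (hd ys)) xss \<Longrightarrow>
   successively R (concat xss)"
  by (induction xss rule: induct_list012) (auto simp: successively_append_iff)

lemma permutations_of_multiset_replicate:
  "permutations_of_multiset (replicate_mset n a) = {replicate n a}"
proof -
  have "w = replicate n a" if "mset w = replicate_mset n a" for w
  proof (rule replicate_eqI)
    show "length w = n"
      using that by (metis size_mset size_replicate_mset)
    show "y = a" if "y \<in> set w" for y
      using \<open>mset w = _\<close> that by (metis in_replicate_mset set_mset_mset)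
  qed
  then show ?thesis
    by (auto simp: permutations_of_multiset_def)
qed

lemma card_permutations_of_multiset_add_fresh:
  "x \<notin># A \<Longrightarrow>
   card (permutations_of_multiset (A + {#x#})) = Suc (size A) * card (permutations_of_multiset A)"
  using card_permutations_of_multiset_insert_aux[of A x] by (simp add: not_in_iff)

lemma length_adj_swap [simp]: "length (adj_swap j w) = length w"
  by (simp add: adj_swap_def)

lemma adj_swap_Cons_Suc [simp]: "adj_swap (Suc j) (x # w) = x # adj_swap j w"
  by (simp add: adj_swap_def)

lemma adj_swap_0 [simp]: "adj_swap 0 (a # b # w) = b # a # w"
  by (simp add: adj_swap_def)

lemma adj_swap_append_left: "adj_swap (length u + j) (u @ w) = u @ adj_swap j w"
  by (induction u) auto

lemma adj_swap_append_right: "Suc j < length w \<Longrightarrow> adj_swap j (w @ v) = adj_swap j w @ v"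
  by (simp add: adj_swap_def list_update_append nth_append)

lemma nth_adj_swap:
  "Suc j < length w \<Longrightarrow> i < length w \<Longrightarrow>
   adj_swap j w ! i = (if i = j then w ! Suc j else if i = Suc j then w ! j else w ! i)"
  by (simp add: adj_swap_def nth_list_update)

lemma adj_swap_adj_swap: "Suc j < length w \<Longrightarrow> adj_swap j (adj_swap j w) = w"
  by (rule nth_equalityI) (auto simp: nth_adj_swap)

lemma rev_adj_swap:
  "Suc j < length w \<Longrightarrow> rev (adj_swap j w) = adj_swap (length w - 2 - j) (rev w)"
  by (rule nth_equalityI) (auto simp: nth_adj_swap rev_nth)

lemma mset_adj_swap: "Suc j < length w \<Longrightarrow> mset (adj_swap j w) = mset w"
  by (simp add: adj_swap_def mset_update nth_list_update)

lemma adj_swap_eq_self_iff: "Suc j < length w \<Longrightarrow> adj_swap j w = w \<longleftrightarrow> w ! j = w ! Suc j"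
  by (metis Suc_lessD nth_adj_swap nth_equalityI length_adj_swap)

lemma adj_interchangeI: "v = adj_swap j u \<Longrightarrow> Suc j < length u \<Longrightarrow> adj_interchange u v"
  unfolding adj_interchange_def by blast

lemma adj_interchange_sym: "adj_interchange u v \<Longrightarrow> adj_interchange v u"
  unfolding adj_interchange_def by (metis adj_swap_adj_swap length_adj_swap)

lemma adj_interchange_rev: "adj_interchange u v \<Longrightarrow> adj_interchange (rev u) (rev v)"
proof -
  assume "adj_interchange u v"
  then obtain j where j: "Suc j < length u" "v = adj_swap j u"
    unfolding adj_interchange_def by blast
  then show ?thesis
    by (intro adj_interchangeI[of _ "length u - 2 - j"]) (auto simp: rev_adj_swap)
qed

section \<open>Gray codes for the words of a multiset\<close>

definition gray_code :: "'a multiset \<Rightarrow> 'a list list \<Rightarrow> bool" where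
  "gray_code M L \<longleftrightarrow>
     distinct L \<and> set L = permutations_of_multiset M \<and> successively adj_interchange L"

lemma gray_code_not_Nil: "gray_code M L \<Longrightarrow> L \<noteq> []"
  unfolding gray_code_def using ex_mset[of M] by (auto simp: permutations_of_multiset_def)

lemma length_gray_code: "gray_code M L \<Longrightarrow> length L = card (permutations_of_multiset M)"
  unfolding gray_code_def by (metis distinct_card)

lemma length_in_gray_code: "gray_code M L \<Longrightarrow> w \<in> set L \<Longrightarrow> length w = size M"
  unfolding gray_code_def by (auto simp: permutations_of_multiset_def)

lemma gray_code_rev: "gray_code M L \<Longrightarrow> gray_code M (rev L)"
  unfolding gray_code_def by (auto elim: successively_mono intro: adj_interchange_sym)

lemma gray_code_map_rev: "gray_code M L \<Longrightarrow> gray_code M (map rev L)"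
  unfolding gray_code_def
  by (auto simp: distinct_map successively_map inj_on_def elim: successively_mono
      intro: adj_interchange_rev)

lemma reverse_adj_gray_code_iff:
  "reverse_adj_gray_code n L \<longleftrightarrow>
     gray_code (mset_set {1..n}) L \<and> (\<forall>i < fact n div 2. L ! (i + fact n div 2) = rev (L ! i))"
proof -
  have "permutations_of_set {1..n} = permutations_of_multiset (mset_set {1..n})"
    by (simp add: permutations_of_set_altdef)
  moreover have "card (permutations_of_multiset (mset_set {1..n})) = fact n"
    by (simp flip: permutations_of_set_altdef)
  ultimately show ?thesis
    unfolding reverse_adj_gray_code_def gray_code_def successively_conv_nth
    by (metis distinct_card)
qed

lemma reverse_adj_gray_code_halves:
  assumes "reverse_adj_gray_code n L" "2 \<le> n"
  defines "h \<equiv> fact n div 2"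
  shows "L = take h L @ map rev (take h L)"
proof -
  have "even (fact n :: nat)"
    using assms(2) by (simp add: dvd_fact)
  then have len: "length L = 2 * h"
    using assms(1) unfolding h_def reverse_adj_gray_code_def by auto
  have sym: "L ! (i + h) = rev (L ! i)" if "i < h" for i
    using assms(1) that unfolding h_def reverse_adj_gray_code_def by blast
  show ?thesis
  proof (rule nth_equalityI)
    fix i assume "i < length L"
    then show "L ! i = (take h L @ map rev (take h L)) ! i"
      using len sym[of "i - h"] by (cases "i < h") (auto simp: nth_append)
  qed (use len in simp)
qed

lemma reverse_adj_gray_codeI:
  assumes "gray_code (mset_set {1..n}) (X @ map rev X)"
  shows "reverse_adj_gray_code n (X @ map rev X)"
proof -
  have "length (X @ map rev X) = fact n"
    using length_gray_code[OF assms] by (simp flip: permutations_of_set_altdef)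
  then have "fact n div 2 = length X"
    by simp
  then show ?thesis
    using assms unfolding reverse_adj_gray_code_iff by (simp add: nth_append)
qed

section \<open>Filling the blanks of a pattern\<close>

fun fill :: "'a list \<Rightarrow> 'a option list \<Rightarrow> 'a list" where
  "fill ps [] = []"
| "fill ps (None # P) = hd ps # fill (tl ps) P"
| "fill ps (Some x # P) = x # fill ps P"

abbreviation blanks :: "'a option list \<Rightarrow> nat" where
  "blanks P \<equiv> count (mset P) None"

definition pattern_mset :: "nat \<Rightarrow> 'a multiset \<Rightarrow> 'a option multiset" where
  "pattern_mset m C = replicate_mset m None + image_mset Some C"

definition contiguous_blanks :: "nat \<Rightarrow> 'a option list \<Rightarrow> bool" where
  "contiguous_blanks m P \<longleftrightarrow> (\<exists>u v. P = map Some u @ replicate m None @ map Some v)"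

lemma contiguous_blanksI: "contiguous_blanks m (map Some u @ replicate m None @ map Some v)"
  unfolding contiguous_blanks_def by blast

lemma contiguous_blanks_rev: "contiguous_blanks m P \<Longrightarrow> contiguous_blanks m (rev P)"
  unfolding contiguous_blanks_def by (metis rev_append rev_map rev_replicate append.assoc)

lemma count_image_mset_Some_None [simp]: "count (image_mset Some M) None = 0"
  by (simp add: count_eq_zero_iff)

lemma length_fill [simp]: "length (fill p P) = length P"
  by (induction p P rule: fill.induct) auto

lemma fill_append_right: "blanks P \<le> length p \<Longrightarrow> fill (p @ q) P = fill p P"
  by (induction p P rule: fill.induct) (auto simp: hd_append tl_append split: list.splits)

lemma fill_append: "fill p (P @ Q) = fill p P @ fill (drop (blanks P) p) Q"
  by (induction p P rule: fill.induct) (auto simp: drop_Suc)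

lemma fill_map_Some [simp]: "fill p (map Some u) = u"
  by (induction u) auto

lemma fill_replicate_None: "n \<le> length p \<Longrightarrow> fill p (replicate n None) = take n p"
proof (induction n arbitrary: p)
  case (Suc n)
  then obtain a p' where "p = a # p'" by (cases p) auto
  with Suc show ?case by simp
qed simp

lemma fill_contiguous_blanks:
  "fill p (map Some u @ replicate (length p) None @ map Some v) = u @ p @ v"
  by (simp add: fill_append fill_replicate_None)

lemma mset_fill:
  "length p = blanks P \<Longrightarrow> mset (fill p P) = mset p + mset (map the (filter (\<lambda>c. c \<noteq> None) P))"
proof (induction p P rule: fill.induct)
  case (2 ps P)
  then obtain a p' where "ps = a # p'" by (cases ps) auto
  with 2 show ?case by simp
qed auto

lemma fill_inverse:
  assumes "length p = blanks P" "set p \<inter> X = {}" "set P \<subseteq> insert None (Some ` X)"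
  shows "filter (\<lambda>c. c \<notin> X) (fill p P) = p \<and>
         map (\<lambda>c. if c \<in> X then Some c else None) (fill p P) = P"
  using assms
proof (induction p P rule: fill.induct)
  case (2 ps P)
  then obtain a p' where "ps = a # p'" by (cases ps) auto
  with 2 show ?case by auto
qed auto

lemma fill_filter_map:
  "fill (filter (\<lambda>c. c \<notin> X) w) (map (\<lambda>c. if c \<in> X then Some c else None) w) = w"
  by (induction w) auto

lemma fill_adj_swap:
  "Suc j < length P \<Longrightarrow> P ! j \<noteq> None \<or> P ! Suc j \<noteq> None \<Longrightarrow>
   fill p (adj_swap j P) = adj_swap j (fill p P)"
proof (induction P arbitrary: p j)
  case (Cons c P)
  show ?case
  proof (cases j)
    case 0
    with Cons.prems obtain d P' where "P = d # P'" by (cases P) auto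
    with 0 Cons.prems show ?thesis by (cases c; cases d) auto
  next
    case (Suc j')
    with Cons show ?thesis by (cases c) auto
  qed
qed simp

lemma rev_fill: "length p = blanks P \<Longrightarrow> rev (fill p P) = fill (rev p) (rev P)"
proof (induction P arbitrary: p)
  case (Cons c P)
  show ?case
  proof (cases c)
    case None
    with Cons.prems obtain a p' where p: "p = a # p'" "length p' = blanks P" by (cases p) auto
    then show ?thesis
      using None Cons.IH by (simp add: fill_append fill_append_right)
  next
    case (Some x)
    with Cons show ?thesis by (simp add: fill_append)
  qed
qed simp

lemma adj_interchange_fill:
  assumes "adj_interchange P Q" "P \<noteq> Q"
  shows "adj_interchange (fill p P) (fill p Q)"
proof -
  obtain j where j: "Suc j < length P" "Q = adj_swap j P"
    using assms(1) unfolding adj_interchange_def by blast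
  then have "P ! j \<noteq> P ! Suc j"
    using assms(2) adj_swap_eq_self_iff by metis
  then have "fill p Q = adj_swap j (fill p P)"
    using j by (metis fill_adj_swap)
  then show ?thesis
    using j by (intro adj_interchangeI) auto
qed

lemma adj_interchange_fill_contiguous:
  assumes "contiguous_blanks (length p) P" "adj_interchange p q"
  shows "adj_interchange (fill p P) (fill q P)"
proof -
  obtain u v where P: "P = map Some u @ replicate (length p) None @ map Some v"
    using assms(1) unfolding contiguous_blanks_def by blast
  obtain j where j: "Suc j < length p" "q = adj_swap j p"
    using assms(2) unfolding adj_interchange_def by blast
  have "fill p P = u @ p @ v" "fill q P = u @ q @ v"
    using fill_contiguous_blanks[of p u v] fill_contiguous_blanks[of q u v] j by (simp_all add: P)
  then have "fill q P = adj_swap (length u + j) (fill p P)"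
    using j by (simp add: adj_swap_append_left adj_swap_append_right)
  then show ?thesis
    using j by (intro adj_interchangeI) (auto simp: P)
qed

lemma
  assumes "mset P = pattern_mset m C"
  shows blanks_pattern: "blanks P = m"
    and set_pattern: "set P \<subseteq> insert None (Some ` set_mset C)"
    and letters_pattern: "mset (map the (filter (\<lambda>c. c \<noteq> None) P)) = C"
proof -
  show "blanks P = m"
    using assms by (simp add: pattern_mset_def)
  show "set P \<subseteq> insert None (Some ` set_mset C)"
    using arg_cong[OF assms, of set_mset] by (auto simp: pattern_mset_def)
  have "mset (filter (\<lambda>c. c \<noteq> None) P) = image_mset Some C"
    using assms by (simp add: mset_filter pattern_mset_def filter_mset_image_mset)
  then show "mset (map the (filter (\<lambda>c. c \<noteq> None) P)) = C"
    by (simp add: multiset.map_comp)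
qed

lemma mset_fill_pattern:
  assumes "mset P = pattern_mset (length p) C"
  shows "mset (fill p P) = mset p + C"
  using mset_fill[of p P] blanks_pattern[OF assms] letters_pattern[OF assms] by simp

text \<open>Since the letters of \<open>C\<close> do not occur in \<open>A\<close>, a word of \<open>A + C\<close> is recovered from the
  subword of its letters from \<open>A\<close> and the pattern that keeps only its letters from \<open>C\<close>.\<close>

lemma bij_betw_fill:
  assumes disj: "set_mset A \<inter> set_mset C = {}"
  shows "bij_betw (\<lambda>(p, P). fill p P)
           (permutations_of_multiset A \<times> permutations_of_multiset (pattern_mset (size A) C))
           (permutations_of_multiset (A + C))"
proof -
  define split_word where "split_word w =
    (filter (\<lambda>c. c \<notin># C) w, map (\<lambda>c. if c \<in># C then Some c else None) w)" for w
  have "split_word (fill p P) = (p, P)"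
    if "mset p = A" "mset P = pattern_mset (size A) C" for p P
  proof -
    have "length p = blanks P"
      using that blanks_pattern[OF that(2)] by (metis size_mset)
    moreover have "set p \<inter> set_mset C = {}"
      using that(1) disj by auto
    ultimately show ?thesis
      using fill_inverse[of p P "set_mset C"] set_pattern[OF that(2)] by (simp add: split_word_def)
  qed
  moreover have "mset (fst (split_word w)) = A \<and> mset (snd (split_word w)) = pattern_mset (size A) C"
    if "mset w = A + C" for w
  proof -
    have "filter_mset (\<lambda>c. c \<notin># C) A = filter_mset (\<lambda>c. True) A"
      using disj by (intro filter_mset_cong0) auto
    moreover have "image_mset (\<lambda>c. if c \<in># C then Some c else None) A = image_mset (\<lambda>_. None) A"
      using disj by (intro image_mset_cong) auto
    moreover have "image_mset (\<lambda>c. if c \<in># C then Some c else None) C = image_mset Some C"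
      by (intro image_mset_cong) auto
    ultimately show ?thesis
      using that by (simp add: split_word_def mset_filter pattern_mset_def image_mset_const_eq)
  qed
  ultimately show ?thesis
    by (intro bij_betw_byWitness[where f' = split_word])
      (auto simp: permutations_of_multiset_def split_word_def fill_filter_map mset_fill_pattern)
qed

definition blocks :: "'a list list \<Rightarrow> 'a option list list list \<Rightarrow> 'a list list" where
  "blocks B Ts = concat (map2 (\<lambda>p. map (fill p)) B Ts)"

lemma blocks_Nil [simp]: "blocks [] Ts = []"
  by (simp add: blocks_def)

lemma blocks_Cons [simp]: "blocks (p # B) (Ps # Ts) = map (fill p) Ps @ blocks B Ts"
  by (simp add: blocks_def)

lemma blocks_append:
  "length B = length Ts \<Longrightarrow> blocks (B @ B') (Ts @ Ts') = blocks B Ts @ blocks B' Ts'"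
  by (simp add: blocks_def)

lemma length_blocks:
  "length Ts = length B \<Longrightarrow> \<forall>Ps\<in>set Ts. length Ps = q \<Longrightarrow> length (blocks B Ts) = length B * q"
  by (induction Ts B rule: list_induct2) auto

lemma set_blocks:
  "length Ts = length B \<Longrightarrow> \<forall>Ps\<in>set Ts. set Ps = S \<Longrightarrow>
   set (blocks B Ts) = (\<lambda>(p, P). fill p P) ` (set B \<times> S)"
  by (induction Ts B rule: list_induct2) auto

lemma hd_blocks:
  "B \<noteq> [] \<Longrightarrow> Ts \<noteq> [] \<Longrightarrow> hd Ts \<noteq> [] \<Longrightarrow> hd (blocks B Ts) = fill (hd B) (hd (hd Ts))"
  by (cases B; cases Ts) (auto simp: hd_map)

lemma last_blocks:
  assumes "length Ts = length B" "B \<noteq> []" "last Ts \<noteq> []"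
  shows "last (blocks B Ts) = fill (last B) (last (last Ts))"
proof -
  obtain B' p Ts' Ps where "B = B' @ [p]" "Ts = Ts' @ [Ps]"
    using assms(1,2) by (metis length_0_conv rev_exhaust)
  with assms show ?thesis
    by (simp add: blocks_append last_map)
qed

lemma blocks_map_rev:
  "length Ts = length B \<Longrightarrow> \<forall>p\<in>set B. length p = m \<Longrightarrow> \<forall>Ps\<in>set Ts. \<forall>P\<in>set Ps. blanks P = m \<Longrightarrow>
   blocks (map rev B) (map (map rev) Ts) = map rev (blocks B Ts)"
  by (induction Ts B rule: list_induct2) (auto simp: rev_fill)

lemma blocks_append_map_rev:
  assumes "length Ts = length B" "\<forall>p\<in>set B. length p = m" "\<forall>Ps\<in>set Ts. \<forall>P\<in>set Ps. blanks P = m"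
  shows "blocks (B @ map rev B) (Ts @ map (map rev) Ts) = blocks B Ts @ map rev (blocks B Ts)"
  using blocks_append[of B Ts] blocks_map_rev[OF assms] assms(1) by simp

lemma successively_blocks:
  assumes "length Ts = length B" "\<forall>p\<in>set B. length p = m" "successively adj_interchange B"
    and "\<forall>Ps\<in>set Ts. Ps \<noteq> [] \<and> successively (\<lambda>P Q. adj_interchange P Q \<and> P \<noteq> Q) Ps"
    and "successively (\<lambda>Ps Qs. last Ps = hd Qs \<and> contiguous_blanks m (last Ps)) Ts"
  shows "successively adj_interchange (blocks B Ts)"
  using assms
proof (induction Ts B rule: list_induct2)
  case (Cons Ps Ts p B)
  have inner: "successively adj_interchange (map (fill p) Ps)"
    using Cons.prems(3) unfolding successively_map
    by (auto elim: successively_mono intro: adj_interchange_fill)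
  show ?case
  proof (cases B)
    case Nil
    with Cons.hyps inner show ?thesis by simp
  next
    case (Cons q B')
    with \<open>length Ts = length B\<close> obtain Qs Ts' where Ts: "Ts = Qs # Ts'"
      by (cases Ts) auto
    have "last Ps = hd Qs" "contiguous_blanks (length p) (last Ps)" "adj_interchange p q"
      using Cons.prems(1,2,4) \<open>B = q # B'\<close> Ts by auto
    then have "adj_interchange (fill p (last Ps)) (fill q (hd Qs))"
      by (metis adj_interchange_fill_contiguous)
    with Cons.IH Cons.prems \<open>B = q # B'\<close> Ts inner show ?thesis
      by (auto simp: successively_append_iff last_map hd_map)
  qed
qed simp

lemma gray_code_blocks:
  assumes B: "gray_code A B" and disj: "set_mset A \<inter> set_mset C = {}"
    and len: "length Ts = length B"
    and Ts: "\<forall>Ps\<in>set Ts. gray_code (pattern_mset (size A) C) Ps"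
    and joins: "successively (\<lambda>Ps Qs. last Ps = hd Qs \<and> contiguous_blanks (size A) (last Ps)) Ts"
  shows "gray_code (A + C) (blocks B Ts)"
proof -
  let ?S = "permutations_of_multiset (pattern_mset (size A) C)"
  have bij: "bij_betw (\<lambda>(p, P). fill p P) (permutations_of_multiset A \<times> ?S)
               (permutations_of_multiset (A + C))"
    by (rule bij_betw_fill[OF disj])
  have setB: "set B = permutations_of_multiset A"
    using B by (simp add: gray_code_def)
  have set: "set (blocks B Ts) = permutations_of_multiset (A + C)"
    using set_blocks[OF len, of ?S] Ts bij setB by (simp add: gray_code_def bij_betw_def)
  have "length (blocks B Ts) = length B * card ?S"
    using Ts by (intro length_blocks[OF len]) (simp add: length_gray_code)
  also have "\<dots> = card (permutations_of_multiset (A + C))"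
    using bij_betw_same_card[OF bij] B by (simp add: card_cartesian_product length_gray_code)
  finally have "distinct (blocks B Ts)"
    using set by (intro card_distinct) simp
  moreover have "successively adj_interchange (blocks B Ts)"
    using B Ts joins
    by (intro successively_blocks[OF len])
      (auto simp: gray_code_def length_in_gray_code gray_code_not_Nil successively_distinct)
  ultimately show ?thesis
    using set by (simp add: gray_code_def)
qed

definition slide :: "nat \<Rightarrow> 'a \<Rightarrow> 'a option list list" where
  "slide l x = map (\<lambda>i. replicate i None @ Some x # replicate (l - i) None) [0..<Suc l]"

lemma hd_slide [simp]: "hd (slide l x) = Some x # replicate l None"
  by (simp add: slide_def hd_map del: upt_Suc)

lemma last_slide [simp]: "last (slide l x) = replicate l None @ [Some x]"
  by (simp add: slide_def last_map del: upt_Suc)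

lemma length_slide [simp]: "length (slide l x) = Suc l"
  by (simp add: slide_def)

lemma slide_not_Nil [simp]: "slide l x \<noteq> []"
  by (simp add: slide_def)

lemma gray_code_slide: "gray_code (pattern_mset l {#x#}) (slide l x)"
proof -
  define f where "f i = replicate i None @ Some x # replicate (l - i) None" for i
  have slide: "slide l x = map f [0..<Suc l]"
    unfolding slide_def f_def by simp
  have nth_f: "f i ! k = (if k = i then Some x else None)" if "k \<le> l" "i \<le> l" for i k
    using that by (auto simp: f_def nth_append nth_Cons' split: if_splits)
  have "inj_on f {0..<Suc l}"
    by (rule inj_onI) (metis atLeastLessThan_iff less_Suc_eq_le nth_f option.distinct(1))
  then have dist: "distinct (slide l x)"
    by (simp add: slide distinct_map del: upt_Suc)
  have "mset (f i) = pattern_mset l {#x#}" if "i \<le> l" for i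
    using that by (auto simp: f_def pattern_mset_def multiset_eq_iff)
  then have "set (slide l x) \<subseteq> permutations_of_multiset (pattern_mset l {#x#})"
    by (auto simp: slide permutations_of_multiset_def)
  moreover have "card (permutations_of_multiset (pattern_mset l {#x#})) = card (set (slide l x))"
    using card_permutations_of_multiset_add_fresh[of "Some x" "replicate_mset l None"] dist
    by (simp add: pattern_mset_def permutations_of_multiset_replicate distinct_card)
  ultimately have set: "set (slide l x) = permutations_of_multiset (pattern_mset l {#x#})"
    by (intro card_subset_eq) simp_all
  have "adj_interchange (f k) (f (Suc k))" if "Suc k < Suc l" for k
  proof (rule adj_interchangeI)
    have "l - k = Suc (l - Suc k)"
      using that by simp
    then have "f k = replicate k None @ Some x # None # replicate (l - Suc k) None"
      "f (Suc k) = replicate k None @ None # Some x # replicate (l - Suc k) None"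
      by (simp_all add: f_def replicate_app_Cons_same)
    then show "f (Suc k) = adj_swap k (f k)"
      using adj_swap_append_left[of "replicate k (None :: 'a option)" 0] by simp
  qed (use that in \<open>simp add: f_def\<close>)
  then have "successively adj_interchange (slide l x)"
    unfolding slide by (intro successively_map_upt) simp
  with dist set show ?thesis
    by (simp add: gray_code_def)
qed

text \<open>The new letter \<open>x\<close> sweeps through each word of \<open>P\<close>, alternately from left to right and
  from right to left; \<open>s\<close> says whether it starts in front of the first word.\<close>

definition sweep :: "'a \<Rightarrow> bool \<Rightarrow> 'a list list \<Rightarrow> 'a list list" where
  "sweep x s P = blocks P (map (\<lambda>k. if even k = s then slide (length (hd P)) x
                                   else rev (slide (length (hd P)) x)) [0..<length P])"

lemma gray_code_sweep:
  assumes P: "gray_code M P" and x: "x \<notin># M"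
  shows "gray_code (M + {#x#}) (sweep x s P)"
  unfolding sweep_def
proof (rule gray_code_blocks[OF P])
  have l: "length (hd P) = size M"
    using P by (simp add: gray_code_not_Nil length_in_gray_code)
  show "set_mset M \<inter> set_mset {#x#} = {}"
    using x by simp
  show "\<forall>Ps\<in>set (map (\<lambda>k. if even k = s then slide (length (hd P)) x
      else rev (slide (length (hd P)) x)) [0..<length P]). gray_code (pattern_mset (size M) {#x#}) Ps"
    by (auto simp: l gray_code_slide gray_code_rev)
  show "successively (\<lambda>Ps Qs. last Ps = hd Qs \<and> contiguous_blanks (size M) (last Ps))
      (map (\<lambda>k. if even k = s then slide (length (hd P)) x
        else rev (slide (length (hd P)) x)) [0..<length P])"
    using contiguous_blanksI[of "size M" "[]" "[x]"] contiguous_blanksI[of "size M" "[x]" "[]"]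
    by (intro successively_map_upt) (auto simp: l hd_rev last_rev)
qed simp

lemma length_sweep: "gray_code M P \<Longrightarrow> length (sweep x s P) = length P * Suc (size M)"
  unfolding sweep_def
  by (subst length_blocks[where q = "Suc (size M)"])
    (auto simp: gray_code_not_Nil length_in_gray_code)

lemma hd_sweep: "P \<noteq> [] \<Longrightarrow> hd (sweep x s P) = (if s then x # hd P else hd P @ [x])"
  unfolding sweep_def
  by (subst hd_blocks) (auto simp: hd_map hd_rev fill_contiguous_blanks[of _ "[x]" "[]", simplified]
      fill_contiguous_blanks[of _ "[]" "[x]", simplified])

lemma last_sweep:
  assumes "gray_code M P"
  shows "last (sweep x s P) = (if s = even (length P) then x # last P else last P @ [x])"
proof -
  have "P \<noteq> []" "length (hd P) = length (last P)"
    using assms by (simp_all add: gray_code_not_Nil length_in_gray_code)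
  then show ?thesis
    unfolding sweep_def
    by (subst last_blocks) (auto simp: last_map last_rev
        fill_contiguous_blanks[of _ "[x]" "[]", simplified]
        fill_contiguous_blanks[of _ "[]" "[x]", simplified] simp del: upt_Suc)
qed

fun sweeps :: "('a \<times> bool) list \<Rightarrow> 'a list list \<Rightarrow> 'a list list" where
  "sweeps [] P = P"
| "sweeps ((x, s) # xs) P = sweeps xs (sweep x s P)"

fun add_ends :: "('a \<times> bool) list \<Rightarrow> 'a list \<Rightarrow> 'a list" where
  "add_ends [] w = w"
| "add_ends ((x, s) # xs) w = add_ends xs (if s then x # w else w @ [x])"

lemma gray_code_sweeps:
  assumes "gray_code M P" "even (length P)" "distinct (map fst xs)" "\<forall>x\<in>set (map fst xs). x \<notin># M"
  shows "gray_code (M + mset (map fst xs)) (sweeps xs P) \<and> hd (sweeps xs P) = add_ends xs (hd P) \<and>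
         last (sweeps xs P) = add_ends xs (last P) \<and> even (length (sweeps xs P))"
  using assms
proof (induction xs arbitrary: M P)
  case (Cons xs' xs)
  obtain x s where xs': "xs' = (x, s)"
    by (cases xs')
  have "gray_code (M + {#x#}) (sweep x s P)"
    using Cons.prems xs' by (intro gray_code_sweep) auto
  moreover have "even (length (sweep x s P))"
    using Cons.prems(1,2) by (simp add: length_sweep)
  ultimately have "gray_code (M + {#x#} + mset (map fst xs)) (sweeps xs (sweep x s P)) \<and>
      hd (sweeps xs (sweep x s P)) = add_ends xs (hd (sweep x s P)) \<and>
      last (sweeps xs (sweep x s P)) = add_ends xs (last (sweep x s P)) \<and>
      even (length (sweeps xs (sweep x s P)))"
    using Cons.prems xs' by (intro Cons.IH) auto
  then show ?case
    using Cons.prems xs' by (simp add: hd_sweep last_sweep gray_code_not_Nil add_mset_commute)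
qed simp

definition two_letters :: "nat \<Rightarrow> nat \<Rightarrow> nat \<Rightarrow> 'a \<Rightarrow> 'a \<Rightarrow> 'a option list" where
  "two_letters m i j u v =
     replicate i None @ Some u # replicate (j - i - 1) None @ Some v # replicate (m + 1 - j) None"

lemma length_two_letters: "i < j \<Longrightarrow> j \<le> m + 1 \<Longrightarrow> length (two_letters m i j u v) = m + 2"
  by (simp add: two_letters_def)

lemma nth_two_letters:
  "i < j \<Longrightarrow> j \<le> m + 1 \<Longrightarrow> k < m + 2 \<Longrightarrow>
   two_letters m i j u v ! k = (if k = i then Some u else if k = j then Some v else None)"
  by (auto simp: two_letters_def nth_append nth_Cons' split: if_splits)

lemma mset_two_letters:
  "i < j \<Longrightarrow> j \<le> m + 1 \<Longrightarrow> mset (two_letters m i j u v) = pattern_mset m {#u, v#}"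
  by (auto simp: two_letters_def pattern_mset_def multiset_eq_iff)

lemma two_letters_eq_iff:
  assumes "i < j" "j \<le> m + 1" "i' < j'" "j' \<le> m + 1"
  shows "two_letters m i j u v = two_letters m i' j' u' v' \<longleftrightarrow> i = i' \<and> j = j' \<and> u = u' \<and> v = v'"
proof
  assume eq: "two_letters m i j u v = two_letters m i' j' u' v'"
  have "(if k = i then Some u else if k = j then Some v else None) =
        (if k = i' then Some u' else if k = j' then Some v' else None)" if "k < m + 2" for k
    using arg_cong[OF eq, of "\<lambda>P. P ! k"] that assms by (simp add: nth_two_letters)
  from this[of i] this[of j] this[of i'] this[of j'] assms
  show "i = i' \<and> j = j' \<and> u = u' \<and> v = v'"
    by (auto split: if_splits)
qed simp

lemma two_letters_Suc_left:
  "Suc i < j \<Longrightarrow> j \<le> m + 1 \<Longrightarrow> two_letters m (Suc i) j u v = adj_swap i (two_letters m i j u v)"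
  by (rule nth_equalityI) (auto simp: length_two_letters nth_two_letters nth_adj_swap)

lemma two_letters_swap:
  "Suc i = j \<Longrightarrow> j \<le> m + 1 \<Longrightarrow> two_letters m i j v u = adj_swap i (two_letters m i j u v)"
  by (rule nth_equalityI) (auto simp: length_two_letters nth_two_letters nth_adj_swap)

lemma two_letters_Suc_right:
  "i < j \<Longrightarrow> Suc j \<le> m + 1 \<Longrightarrow> two_letters m i (Suc j) u v = adj_swap j (two_letters m i j u v)"
  by (rule nth_equalityI) (auto simp: length_two_letters nth_two_letters nth_adj_swap)

definition shuttle :: "nat \<Rightarrow> nat \<Rightarrow> 'a \<Rightarrow> 'a \<Rightarrow> 'a option list list" where
  "shuttle m j u v =
     map (\<lambda>i. two_letters m i j u v) [0..<j] @ map (\<lambda>i. two_letters m i j v u) (rev [0..<j])"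

lemma length_shuttle [simp]: "length (shuttle m j u v) = 2 * j"
  by (simp add: shuttle_def)

lemma shuttle_eq_Nil_iff [simp]: "shuttle m j u v = [] \<longleftrightarrow> j = 0"
  by (simp add: shuttle_def)

lemma hd_shuttle: "0 < j \<Longrightarrow> hd (shuttle m j u v) = two_letters m 0 j u v"
  by (simp add: shuttle_def hd_map)

lemma last_shuttle: "0 < j \<Longrightarrow> last (shuttle m j u v) = two_letters m 0 j v u"
  by (simp add: shuttle_def last_map last_rev hd_upt del: upt_Suc)

lemma set_shuttle:
  "set (shuttle m j u v) = (\<lambda>i. two_letters m i j u v) ` {..<j} \<union> (\<lambda>i. two_letters m i j v u) ` {..<j}"
  by (auto simp: shuttle_def)

lemma distinct_shuttle: "j \<le> m + 1 \<Longrightarrow> u \<noteq> v \<Longrightarrow> distinct (shuttle m j u v)"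
  by (auto simp: shuttle_def distinct_map inj_on_def two_letters_eq_iff)

lemma successively_shuttle:
  assumes "0 < j" "j \<le> m + 1"
  shows "successively adj_interchange (shuttle m j u v)"
proof -
  have step: "adj_interchange (two_letters m i j u' v') (two_letters m (Suc i) j u' v')"
    if "Suc i < j" for i and u' v' :: 'a
    using that assms by (intro adj_interchangeI[of _ i] two_letters_Suc_left)
      (auto simp: length_two_letters)
  obtain j' where j': "j = Suc j'"
    using assms by (cases j) auto
  have "adj_interchange (two_letters m j' j u v) (two_letters m j' j v u)"
    using assms j' by (intro adj_interchangeI[of _ j'] two_letters_swap) (auto simp: length_two_letters)
  moreover have "successively adj_interchange (map (\<lambda>i. two_letters m i j u v) [0..<j])"
    using step by (intro successively_map_upt) simp
  moreover have "successively adj_interchange (map (\<lambda>i. two_letters m i j v u) (rev [0..<j]))"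
    unfolding rev_map[symmetric] successively_rev
    using step by (intro successively_map_upt) (simp add: adj_interchange_sym)
  ultimately show ?thesis
    unfolding shuttle_def successively_append_iff using j'
    by (simp add: last_map hd_map hd_rev del: upt_Suc)
qed

text \<open>The shuttle for \<open>j\<close> lists the patterns whose right letter is at position \<open>j\<close>; consecutive
  shuttles are joined by moving the right letter from \<open>j\<close> to \<open>j + 1\<close>, which requires
  alternating the roles of the two letters.\<close>

definition core_path :: "nat \<Rightarrow> 'a \<Rightarrow> 'a \<Rightarrow> 'a option list list" where
  "core_path m a b =
     concat (map (\<lambda>j. if odd j then shuttle m j b a else shuttle m j a b) [1..<m + 2])"

lemma length_core_path: "length (core_path m a b) = (m + 1) * (m + 2)"
proof -
  have "length (core_path m a b) = (\<Sum>j\<leftarrow>[1..<Suc n]. 2 * j)" if "n = m + 1" for n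
    using that by (simp add: core_path_def length_concat comp_def if_distrib cong: if_cong)
  moreover have "(\<Sum>j\<leftarrow>[1..<Suc n]. 2 * j) = n * (n + 1)" for n :: nat
    by (induction n) auto
  ultimately show ?thesis
    by simp
qed

lemma hd_core_path: "hd (core_path m a b) = Some b # Some a # replicate m None"
  by (simp add: core_path_def upt_rec hd_shuttle two_letters_def)

lemma last_core_path:
  assumes "even m"
  shows "last (core_path m a b) = Some a # replicate m None @ [Some b]"
proof -
  have "[1..<m + 2] = [1..<m + 1] @ [m + 1]"
    by simp
  then show ?thesis
    unfolding core_path_def using assms by (simp add: last_shuttle two_letters_def del: upt_Suc)
qed

lemma card_two_letter_patterns:
  "a \<noteq> b \<Longrightarrow> card (permutations_of_multiset (pattern_mset m {#a, b#})) = (m + 1) * (m + 2)"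
  using card_permutations_of_multiset_add_fresh[of "Some b" "replicate_mset m None + {#Some a#}"]
    card_permutations_of_multiset_add_fresh[of "Some a" "replicate_mset m None"]
  by (simp add: pattern_mset_def permutations_of_multiset_replicate add_mset_commute)

lemma set_core_path:
  "set (core_path m a b) =
     (\<Union>j\<in>{1..<m + 2}. (\<lambda>i. two_letters m i j a b) ` {..<j} \<union> (\<lambda>i. two_letters m i j b a) ` {..<j})"
proof -
  have shuttles: "set (if odd j then shuttle m j b a else shuttle m j a b) =
      (\<lambda>i. two_letters m i j a b) ` {..<j} \<union> (\<lambda>i. two_letters m i j b a) ` {..<j}" for j
    by (auto simp: set_shuttle)
  show ?thesis
    unfolding core_path_def set_concat set_map image_image set_upt shuttles ..
qed

lemma distinct_core_path:
  assumes "a \<noteq> b"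
  shows "distinct (core_path m a b)"
proof -
  define G where "G = (\<lambda>j. if odd j then shuttle m j b a else shuttle m j a b)"
  have "distinct (concat (map G [1..<m + 2]))"
  proof (rule distinct_concat)
    show "distinct (map G [1..<m + 2])"
      by (auto simp: G_def distinct_map inj_on_def dest: arg_cong[of _ _ length])
    show "distinct ys" if "ys \<in> set (map G [1..<m + 2])" for ys
      using that assms by (auto simp: G_def distinct_shuttle)
    show "set ys \<inter> set zs = {}"
      if ys_zs: "ys \<in> set (map G [1..<m + 2])" "zs \<in> set (map G [1..<m + 2])" "ys \<noteq> zs"
      for ys zs
    proof -
      obtain j k where jk: "ys = G j" "zs = G k" "j \<le> m + 1" "k \<le> m + 1"
        using ys_zs(1,2) by auto
      with ys_zs(3) have "j \<noteq> k"
        by auto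
      have "two_letters m i j u v \<noteq> two_letters m i' k u' v'"
        if "i < j" "i' < k" for i i' and u v u' v' :: 'a
        using that jk \<open>j \<noteq> k\<close> two_letters_eq_iff[of i j m i' k u v u' v'] by auto
      then show ?thesis
        unfolding jk by (auto simp: G_def set_shuttle)
    qed
  qed
  then show ?thesis
    by (simp add: core_path_def G_def)
qed

lemma successively_core_path: "successively adj_interchange (core_path m a b)"
  unfolding core_path_def
proof (rule successively_concat)
  let ?G = "\<lambda>j. if odd j then shuttle m j b a else shuttle m j a b"
  show "\<forall>xs\<in>set (map ?G [1..<m + 2]). xs \<noteq> [] \<and> successively adj_interchange xs"
    by (auto simp: successively_shuttle)
  show "successively (\<lambda>xs ys. adj_interchange (last xs) (hd ys)) (map ?G [1..<m + 2])"
    by (intro successively_map_upt)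
      (auto simp: hd_shuttle last_shuttle length_two_letters
        intro!: adj_interchangeI two_letters_Suc_right)
qed

lemma gray_code_core_path:
  assumes "a \<noteq> b"
  shows "gray_code (pattern_mset m {#a, b#}) (core_path m a b)"
proof -
  have "set (core_path m a b) \<subseteq> permutations_of_multiset (pattern_mset m {#a, b#})"
    by (auto simp: set_core_path permutations_of_multiset_def mset_two_letters add_mset_commute)
  then have "set (core_path m a b) = permutations_of_multiset (pattern_mset m {#a, b#})"
    using assms distinct_core_path[OF assms] by (intro card_subset_eq)
      (simp_all add: distinct_card length_core_path card_two_letter_patterns)
  then show ?thesis
    using distinct_core_path[OF assms] successively_core_path by (simp add: gray_code_def)
qed

definition pattern_code :: "nat \<Rightarrow> 'a multiset \<Rightarrow> 'a option list list \<Rightarrow> bool" where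
  "pattern_code m C Ps \<longleftrightarrow>
     gray_code (pattern_mset m C) Ps \<and> contiguous_blanks m (hd Ps) \<and> contiguous_blanks m (last Ps)"

lemma pattern_code_rev:
  assumes "pattern_code m C Ps"
  shows "pattern_code m C (rev Ps)"
proof -
  have "Ps \<noteq> []"
    using assms gray_code_not_Nil unfolding pattern_code_def by blast
  with assms show ?thesis
    by (simp add: pattern_code_def gray_code_rev hd_rev last_rev)
qed

lemma pattern_code_map_rev:
  assumes "pattern_code m C Ps"
  shows "pattern_code m C (map rev Ps)"
proof -
  have "Ps \<noteq> []"
    using assms gray_code_not_Nil unfolding pattern_code_def by blast
  with assms show ?thesis
    by (simp add: pattern_code_def gray_code_map_rev hd_map last_map contiguous_blanks_rev)
qed

lemma contiguous_blanks_add_ends: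
  "contiguous_blanks m P \<Longrightarrow> contiguous_blanks m (add_ends (map (apfst Some) xs) P)"
proof (induction xs arbitrary: P)
  case (Cons xs' xs)
  obtain x s where xs': "xs' = (x, s)"
    by (cases xs')
  from Cons.prems obtain u v where "P = map Some u @ replicate m None @ map Some v"
    unfolding contiguous_blanks_def by blast
  then have "contiguous_blanks m (if s then Some x # P else P @ [Some x])"
    using contiguous_blanksI[of m "x # u" v] contiguous_blanksI[of m u "v @ [x]"] by simp
  with Cons.IH xs' show ?case
    by simp
qed simp

definition extend :: "('a \<times> bool) list \<Rightarrow> 'a option list list \<Rightarrow> 'a option list list" where
  "extend xs K = sweeps (map (apfst Some) xs) K"

lemma extend_two_letter_core:
  assumes K: "pattern_code m {#x, y#} K" "even (length K)" and xs: "distinct (x # y # map fst xs)"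
  shows "pattern_code m (mset (x # y # map fst xs)) (extend xs K)"
    and "hd (extend xs K) = add_ends (map (apfst Some) xs) (hd K)"
    and "last (extend xs K) = add_ends (map (apfst Some) xs) (last K)"
proof -
  have fst: "map fst (map (apfst Some) xs) = map Some (map fst xs)"
    by (induction xs) auto
  have "gray_code (pattern_mset m {#x, y#}) K"
    using K(1) by (simp add: pattern_code_def)
  moreover have "distinct (map fst (map (apfst Some) xs))"
    using xs by (simp add: fst distinct_map inj_on_def)
  moreover have "\<forall>z\<in>set (map fst (map (apfst Some) xs)). z \<notin># pattern_mset m {#x, y#}"
    using xs by (auto simp: fst pattern_mset_def)
  ultimately have sweeps:
    "gray_code (pattern_mset m {#x, y#} + mset (map fst (map (apfst Some) xs))) (extend xs K)"
    "hd (extend xs K) = add_ends (map (apfst Some) xs) (hd K)"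
    "last (extend xs K) = add_ends (map (apfst Some) xs) (last K)"
    using gray_code_sweeps K(2) unfolding extend_def by blast+
  moreover have "pattern_mset m {#x, y#} + mset (map fst (map (apfst Some) xs)) =
                 pattern_mset m (mset (x # y # map fst xs))"
    by (simp add: fst pattern_mset_def multiset.map_comp)
  ultimately show "pattern_code m (mset (x # y # map fst xs)) (extend xs K)"
    using K(1) by (simp add: pattern_code_def contiguous_blanks_add_ends)
  show "hd (extend xs K) = add_ends (map (apfst Some) xs) (hd K)"
    and "last (extend xs K) = add_ends (map (apfst Some) xs) (last K)"
    by (fact sweeps)+
qed

lemma pattern_code_sweep_slide:
  assumes "x \<noteq> y"
  shows "pattern_code m {#x, y#} (sweep (Some y) s (slide m x))"
    and "even (length (sweep (Some y) s (slide m x)))"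
proof -
  have "gray_code (pattern_mset m {#x#} + {#Some y#}) (sweep (Some y) s (slide m x))"
    using assms by (intro gray_code_sweep gray_code_slide) (simp add: pattern_mset_def)
  then show "pattern_code m {#x, y#} (sweep (Some y) s (slide m x))"
    using contiguous_blanksI[of m "[y, x]" "[]"] contiguous_blanksI[of m "[x]" "[y]"]
      contiguous_blanksI[of m "[y]" "[x]"] contiguous_blanksI[of m "[]" "[x, y]"]
    by (simp add: pattern_code_def pattern_mset_def add_mset_commute hd_sweep
        last_sweep[OF gray_code_slide])
  show "even (length (sweep (Some y) s (slide m x)))"
    by (simp add: length_sweep[OF gray_code_slide] pattern_mset_def)
qed

lemma pattern_code_core_path:
  assumes "x \<noteq> y" "even m"
  shows "pattern_code m {#x, y#} (core_path m x y)"
    and "pattern_code m {#x, y#} (map rev (core_path m x y))"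
    and "even (length (core_path m x y))"
proof -
  show *: "pattern_code m {#x, y#} (core_path m x y)"
    using assms gray_code_core_path contiguous_blanksI[of m "[y, x]" "[]"]
      contiguous_blanksI[of m "[x]" "[y]"]
    by (simp add: pattern_code_def hd_core_path last_core_path)
  then show "pattern_code m {#x, y#} (map rev (core_path m x y))"
    by (rule pattern_code_map_rev)
  show "even (length (core_path m x y))"
    by (simp add: length_core_path)
qed

lemma extend_sweep_slide:
  assumes "distinct (x # y # map fst xs)" "even m"
  shows "mset (x # y # map fst xs) = C \<Longrightarrow>
      pattern_code m C (extend xs (sweep (Some y) s (slide m x)))"
    and "hd (extend xs (sweep (Some y) s (slide m x))) = add_ends (map (apfst Some) xs)
      (if s then Some y # Some x # replicate m None else Some x # replicate m None @ [Some y])"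
    and "last (extend xs (sweep (Some y) s (slide m x))) = add_ends (map (apfst Some) xs)
      (if s then replicate m None @ [Some x, Some y] else Some y # replicate m None @ [Some x])"
proof -
  have "x \<noteq> y"
    using assms(1) by simp
  note core = extend_two_letter_core[OF pattern_code_sweep_slide[OF this] assms(1)]
  show "mset (x # y # map fst xs) = C \<Longrightarrow>
      pattern_code m C (extend xs (sweep (Some y) s (slide m x)))"
    using core(1) by simp
  show "hd (extend xs (sweep (Some y) s (slide m x))) = add_ends (map (apfst Some) xs)
      (if s then Some y # Some x # replicate m None else Some x # replicate m None @ [Some y])"
    using core(2) by (simp add: hd_sweep)
  show "last (extend xs (sweep (Some y) s (slide m x))) = add_ends (map (apfst Some) xs)
      (if s then replicate m None @ [Some x, Some y] else Some y # replicate m None @ [Some x])"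
    using core(3) assms(2) by (simp add: last_sweep[OF gray_code_slide])
qed

lemma extend_core_path:
  assumes "distinct (x # y # map fst xs)" "even m"
  shows "mset (x # y # map fst xs) = C \<Longrightarrow> pattern_code m C (extend xs (core_path m x y))"
    and "hd (extend xs (core_path m x y)) =
      add_ends (map (apfst Some) xs) (Some y # Some x # replicate m None)"
    and "last (extend xs (core_path m x y)) =
      add_ends (map (apfst Some) xs) (Some x # replicate m None @ [Some y])"
proof -
  have "x \<noteq> y"
    using assms(1) by simp
  note core = extend_two_letter_core[OF pattern_code_core_path(1,3)[OF this assms(2)] assms(1)]
  show "mset (x # y # map fst xs) = C \<Longrightarrow> pattern_code m C (extend xs (core_path m x y))"
    using core(1) by simp
  show "hd (extend xs (core_path m x y)) =
      add_ends (map (apfst Some) xs) (Some y # Some x # replicate m None)"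
    using core(2) by (simp add: hd_core_path)
  show "last (extend xs (core_path m x y)) =
      add_ends (map (apfst Some) xs) (Some x # replicate m None @ [Some y])"
    using core(3) assms(2) by (simp add: last_core_path)
qed

lemma extend_rev_core_path:
  assumes "distinct (x # y # map fst xs)" "even m"
  shows "mset (x # y # map fst xs) = C \<Longrightarrow>
      pattern_code m C (extend xs (map rev (core_path m x y)))"
    and "hd (extend xs (map rev (core_path m x y))) =
      add_ends (map (apfst Some) xs) (replicate m None @ [Some x, Some y])"
    and "last (extend xs (map rev (core_path m x y))) =
      add_ends (map (apfst Some) xs) (Some y # replicate m None @ [Some x])"
proof -
  have "x \<noteq> y"
    using assms(1) by simp
  have "even (length (map rev (core_path m x y)))"
    using pattern_code_core_path(3)[OF \<open>x \<noteq> y\<close> assms(2)] by simp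
  note core = extend_two_letter_core[OF pattern_code_core_path(2)[OF \<open>x \<noteq> y\<close> assms(2)] this
      assms(1)]
  have ne: "core_path m x y \<noteq> []"
    by (simp add: length_core_path flip: length_greater_0_conv)
  show "mset (x # y # map fst xs) = C \<Longrightarrow>
      pattern_code m C (extend xs (map rev (core_path m x y)))"
    using core(1) by simp
  show "hd (extend xs (map rev (core_path m x y))) =
      add_ends (map (apfst Some) xs) (replicate m None @ [Some x, Some y])"
    using core(2) ne by (simp add: hd_map hd_core_path)
  show "last (extend xs (map rev (core_path m x y))) =
      add_ends (map (apfst Some) xs) (Some y # replicate m None @ [Some x])"
    using core(3) ne assms(2) by (simp add: last_map last_core_path)
qed

section \<open>Extending a reverse Gray code\<close>

lemma pad_pattern_chain:
  assumes Ks: "\<forall>K\<in>set Ks. pattern_code m C K" "successively (\<lambda>K K'. last K = hd K') Ks" "Ks \<noteq> []"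
    and h: "even (length Ks)" "even h" "length Ks \<le> h"
  obtains Xs where "length Xs = h" "hd Xs = hd Ks" "last Xs = last Ks"
    "\<forall>X\<in>set Xs. pattern_code m C X" "successively (\<lambda>K K'. last K = hd K') Xs"
proof
  define K where "K = last Ks"
  define f where "f k = (if even (k :: nat) then rev K else K)" for k
  define Xs where "Xs = Ks @ map f [0..<h - length Ks]"
  show "length Xs = h" "hd Xs = hd Ks"
    using h Ks(3) by (simp_all add: Xs_def)
  have "odd (h - length Ks - 1)" if "length Ks < h"
    using h that by presburger
  then show "last Xs = last Ks"
    by (cases "length Ks < h") (auto simp: Xs_def K_def f_def last_map)
  have "pattern_code m C K"
    using Ks(1,3) by (simp add: K_def)
  then show "\<forall>X\<in>set Xs. pattern_code m C X"
    using Ks(1) by (auto simp: Xs_def f_def pattern_code_rev)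
  have "successively (\<lambda>K K'. last K = hd K') (map f [0..<h - length Ks])"
    by (intro successively_map_upt) (auto simp: f_def hd_rev last_rev)
  moreover have "map f [0..<h - length Ks] = [] \<or> last K = hd (hd (map f [0..<h - length Ks]))"
    by (cases "h - length Ks") (auto simp: f_def hd_rev upt_conv_Cons simp del: upt_Suc)
  ultimately show "successively (\<lambda>K K'. last K = hd K') Xs"
    using Ks(2,3) unfolding Xs_def successively_append_iff K_def by auto
qed

lemma successively_joins_append_map_rev:
  assumes "\<forall>X\<in>set Xs. pattern_code m C X" "successively (\<lambda>K K'. last K = hd K') Xs"
    and "last (last Xs) = rev (hd (hd Xs))" "Xs \<noteq> []"
  shows "successively (\<lambda>K K'. last K = hd K' \<and> contiguous_blanks m (last K)) (Xs @ map (map rev) Xs)"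
proof -
  have codes: "\<forall>X\<in>set (Xs @ map (map rev) Xs). pattern_code m C X"
    using assms(1) by (auto intro: pattern_code_map_rev)
  have ne: "X \<noteq> []" if "X \<in> set Xs" for X
    using assms(1) that gray_code_not_Nil unfolding pattern_code_def by blast
  have "successively (\<lambda>K K'. last K = hd K') (Xs @ map (map rev) Xs)"
    unfolding successively_append_iff successively_map using assms(2-4)
    by (auto simp: last_map hd_map ne elim!: successively_mono)
  with codes show ?thesis
    by (auto simp: pattern_code_def elim!: successively_mono)
qed

lemma reverse_adj_gray_code_blocks:
  fixes B :: "nat list list"
  assumes B: "reverse_adj_gray_code m B" "2 \<le> m"
    and C: "mset_set {1..m} + C = mset_set {1..n}" "set_mset C \<inter> {1..m} = {}"
    and Xs: "length Xs = fact m div 2" "\<forall>X\<in>set Xs. pattern_code m C X"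
      "successively (\<lambda>K K'. last K = hd K') Xs" "last (last Xs) = rev (hd (hd Xs))"
  shows "reverse_adj_gray_code n (blocks B (Xs @ map (map rev) Xs))"
proof -
  define B1 where "B1 = take (fact m div 2) B"
  have gB: "gray_code (mset_set {1..m}) B"
    using B(1) by (simp add: reverse_adj_gray_code_iff)
  have B1: "B = B1 @ map rev B1"
    unfolding B1_def by (rule reverse_adj_gray_code_halves[OF B])
  have "length B = fact m"
    using B(1) by (simp add: reverse_adj_gray_code_def)
  then have len_B1: "length B1 = length Xs"
    using Xs(1) by (simp add: B1_def)
  have "fact 2 \<le> (fact m :: nat)"
    using B(2) by (rule fact_mono)
  then have "Xs \<noteq> []"
    using Xs(1) by auto
  then have "gray_code (mset_set {1..m} + C) (blocks B (Xs @ map (map rev) Xs))"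
    using Xs(2) C(2) len_B1 successively_joins_append_map_rev[OF Xs(2-4)]
    by (intro gray_code_blocks[OF gB]) (auto simp: B1 pattern_code_def gray_code_map_rev)
  moreover have lengths: "\<forall>p\<in>set B1. length p = m"
    using length_in_gray_code[OF gB] by (subst (asm) B1) simp
  moreover have blanks: "\<forall>Ps\<in>set Xs. \<forall>P\<in>set Ps. blanks P = m"
    using Xs(2) by (auto simp: pattern_code_def gray_code_def permutations_of_multiset_def
        pattern_mset_def)
  ultimately have "gray_code (mset_set {1..n}) (blocks B1 Xs @ map rev (blocks B1 Xs))"
    using C(1) B1 blocks_append_map_rev[OF len_B1[symmetric] lengths blanks] by simp
  then show ?thesis
    using B1 blocks_append_map_rev[OF len_B1[symmetric] lengths blanks]
    by (simp add: reverse_adj_gray_codeI)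
qed

lemma reverse_adj_gray_code_extend:
  assumes "reverse_adj_gray_code m B" "4 \<le> m"
    and "mset_set {1..m} + C = mset_set {1..n}" "set_mset C \<inter> {1..m} = {}"
    and "\<forall>K\<in>set Ks. pattern_code m C K" "successively (\<lambda>K K'. last K = hd K') Ks" "Ks \<noteq> []"
      "last (last Ks) = rev (hd (hd Ks))" "even (length Ks)" "length Ks \<le> fact m div 2"
  shows "\<exists>L. reverse_adj_gray_code n L"
proof -
  have "(4::nat) dvd fact m"
    using assms(2) by (simp add: dvd_fact)
  then have "even (fact m div 2 :: nat)"
    by presburger
  then obtain Xs where "length Xs = fact m div 2" "hd Xs = hd Ks" "last Xs = last Ks"
    "\<forall>X\<in>set Xs. pattern_code m C X" "successively (\<lambda>K K'. last K = hd K') Xs"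
    using pad_pattern_chain[OF assms(5-7,9)] assms(10) by blast
  moreover have "2 \<le> m"
    using assms(2) by simp
  ultimately have "reverse_adj_gray_code n (blocks B (Xs @ map (map rev) Xs))"
    using assms(1,3,4,8) by (intro reverse_adj_gray_code_blocks) simp_all
  then show ?thesis ..
qed

text \<open>The remaining new letters are swept over a two-letter core in directions chosen so that
  consecutive entries share their end patterns and the last entry ends with the reversal of
  the first pattern.\<close>

definition four_letter_chain :: "nat \<Rightarrow> nat option list list list" where
  "four_letter_chain m =
     [extend [(m + 3, True), (m + 4, True)] (sweep (Some (m + 2)) False (slide m (m + 1))),
      extend [(m + 1, False), (m + 4, True)] (core_path m (m + 2) (m + 3)),
      extend [(m + 3, False), (m + 1, False)] (core_path m (m + 2) (m + 4)),
      extend [(m + 1, False), (m + 2, True)] (map rev (core_path m (m + 4) (m + 3))),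
      extend [(m + 3, True), (m + 2, True)] (map rev (core_path m (m + 4) (m + 1))),
      extend [(m + 2, True), (m + 4, False)] (sweep (Some (m + 3)) True (slide m (m + 1)))]"

definition five_letter_chain :: "nat \<Rightarrow> nat option list list list" where
  "five_letter_chain m =
     [extend [(m + 3, True), (m + 4, True), (m + 5, True)]
        (sweep (Some (m + 2)) False (slide m (m + 1))),
      extend [(m + 1, False), (m + 4, True), (m + 5, True)] (core_path m (m + 2) (m + 3)),
      extend [(m + 3, False), (m + 1, False), (m + 5, True)] (core_path m (m + 2) (m + 4)),
      extend [(m + 4, False), (m + 3, False), (m + 1, False)] (core_path m (m + 2) (m + 5)),
      extend [(m + 2, True), (m + 3, False), (m + 1, False)] (map rev (core_path m (m + 5) (m + 4))),
      rev (extend [(m + 1, False), (m + 4, True), (m + 2, True)]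
        (sweep (Some (m + 3)) True (slide m (m + 5)))),
      rev (extend [(m + 3, True), (m + 4, True), (m + 2, True)]
        (map rev (core_path m (m + 1) (m + 5)))),
      extend [(m + 1, False), (m + 2, True), (m + 5, False)] (core_path m (m + 3) (m + 4)),
      extend [(m + 3, True), (m + 2, True), (m + 5, False)] (map rev (core_path m (m + 4) (m + 1))),
      extend [(m + 2, True), (m + 4, False), (m + 5, False)]
        (sweep (Some (m + 3)) True (slide m (m + 1)))]"

lemma mset_set_atLeastAtMost_append:
  "mset_set {1..m} + mset [Suc m..<Suc (m + r)] = mset_set {1..m + r}"
proof -
  have "mset_set {1..m} + mset_set {Suc m..<Suc (m + r)} = mset_set ({1..m} \<union> {Suc m..<Suc (m + r)})"
    by (rule mset_set_Union[symmetric]) auto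
  also have "{1..m} \<union> {Suc m..<Suc (m + r)} = {1..m + r}"
    by auto
  finally show ?thesis
    by (simp only: mset_upt)
qed

lemma twelve_le_fact_div_2: "4 \<le> m \<Longrightarrow> 12 \<le> fact m div (2 :: nat)"
  using fact_mono[where 'a = nat, of 4 m] by (simp add: fact_numeral)

lemma reverse_adj_gray_code_add_four:
  assumes "reverse_adj_gray_code m B" "4 \<le> m" "even m"
  shows "\<exists>L. reverse_adj_gray_code (m + 4) L"
proof (rule reverse_adj_gray_code_extend[OF assms(1,2)])
  show "mset_set {1..m} + mset [m + 1, m + 2, m + 3, m + 4] = mset_set {1..m + 4}"
    using mset_set_atLeastAtMost_append[of m 4] by (simp add: numeral_eq_Suc)
  show "\<forall>K\<in>set (four_letter_chain m). pattern_code m (mset [m + 1, m + 2, m + 3, m + 4]) K"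
    unfolding four_letter_chain_def list.set ball_simps
    by (intro conjI TrueI; rule extend_sweep_slide(1) extend_core_path(1) extend_rev_core_path(1))
      (simp_all add: assms(3) add_mset_commute)
  show "successively (\<lambda>K K'. last K = hd K') (four_letter_chain m)"
    "last (last (four_letter_chain m)) = rev (hd (hd (four_letter_chain m)))"
    by (simp_all add: four_letter_chain_def assms(3) extend_sweep_slide(2,3) extend_core_path(2,3)
        extend_rev_core_path(2,3))
  show "length (four_letter_chain m) \<le> fact m div 2"
    using twelve_le_fact_div_2[OF assms(2)] by (simp add: four_letter_chain_def)
qed (auto simp: four_letter_chain_def)

lemma reverse_adj_gray_code_add_five:
  assumes "reverse_adj_gray_code m B" "4 \<le> m" "even m"
  shows "\<exists>L. reverse_adj_gray_code (m + 5) L"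
proof (rule reverse_adj_gray_code_extend[OF assms(1,2)])
  show "mset_set {1..m} + mset [m + 1, m + 2, m + 3, m + 4, m + 5] = mset_set {1..m + 5}"
    using mset_set_atLeastAtMost_append[of m 5] by (simp add: numeral_eq_Suc)
  show "\<forall>K\<in>set (five_letter_chain m). pattern_code m (mset [m + 1, m + 2, m + 3, m + 4, m + 5]) K"
    unfolding five_letter_chain_def list.set ball_simps
    by (intro conjI TrueI; (rule pattern_code_rev)?;
        rule extend_sweep_slide(1) extend_core_path(1) extend_rev_core_path(1))
      (simp_all add: assms(3) add_mset_commute)
  show "successively (\<lambda>K K'. last K = hd K') (five_letter_chain m)"
    "last (last (five_letter_chain m)) = rev (hd (hd (five_letter_chain m)))"
    by (simp_all add: five_letter_chain_def assms(3) extend_sweep_slide(2,3) extend_core_path(2,3)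
        extend_rev_core_path(2,3) hd_rev last_rev)
  show "length (five_letter_chain m) \<le> fact m div 2"
    using twelve_le_fact_div_2[OF assms(2)] by (simp add: five_letter_chain_def)
qed (auto simp: five_letter_chain_def)

section \<open>Small cases\<close>

lemma reverse_adj_gray_code_by_check:
  assumes "length L = fact n" "distinct L" "\<forall>w\<in>set L. sort w = [1..<Suc n]"
    and "successively (\<lambda>u v. \<exists>j\<in>set [0..<n - 1]. v = adj_swap j u) L"
    and "take (fact n div 2) (drop (fact n div 2) L) = map rev (take (fact n div 2) L)"
  shows "reverse_adj_gray_code n L"
proof -
  have perm: "mset w = mset_set {1..n}" if "w \<in> set L" for w
    using assms(3) that by (metis mset_sort mset_upt atLeastLessThanSuc_atLeastAtMost)
  have "set L = permutations_of_multiset (mset_set {1..n})"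
  proof (rule card_subset_eq)
    show "set L \<subseteq> permutations_of_multiset (mset_set {1..n})"
      using perm by (auto simp: permutations_of_multiset_def)
    show "card (set L) = card (permutations_of_multiset (mset_set {1..n}))"
      using assms(1,2) by (simp add: distinct_card flip: permutations_of_set_altdef)
  qed simp
  moreover have "successively adj_interchange L"
    using assms(4)
  proof (rule successively_mono)
    fix u v assume "u \<in> set L" "\<exists>j\<in>set [0..<n - 1]. v = adj_swap j u"
    moreover from \<open>u \<in> set L\<close> have "length u = n"
      using perm by (metis size_mset size_mset_set card_atLeastAtMost diff_Suc_1)
    ultimately show "adj_interchange u v"
      by (auto intro: adj_interchangeI)
  qed
  moreover have "L ! (i + fact n div 2) = rev (L ! i)" if "i < fact n div 2" for i
    using arg_cong[OF assms(5), of "\<lambda>xs. xs ! i"] that assms(1) by (simp add: add.commute)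
  ultimately show ?thesis
    using assms(2) by (simp add: reverse_adj_gray_code_iff gray_code_def)
qed

definition listing4 :: "nat list list" where
  "listing4 =
   [[1,2,3,4], [1,2,4,3], [1,4,2,3], [4,1,2,3], [4,1,3,2], [1,4,3,2],
    [1,3,4,2], [1,3,2,4], [3,1,2,4], [3,1,4,2], [3,4,1,2], [4,3,1,2],
    [4,3,2,1], [3,4,2,1], [3,2,4,1], [3,2,1,4], [2,3,1,4], [2,3,4,1],
    [2,4,3,1], [4,2,3,1], [4,2,1,3], [2,4,1,3], [2,1,4,3], [2,1,3,4]]"

definition listing5 :: "nat list list" where
  "listing5 =
   [[1,2,3,4,5], [1,2,3,5,4], [1,2,5,3,4], [1,5,2,3,4], [5,1,2,3,4], [5,2,1,3,4],
    [2,5,1,3,4], [2,1,5,3,4], [2,1,3,5,4], [2,1,3,4,5], [2,3,1,4,5], [2,3,1,5,4],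
    [2,3,5,1,4], [2,5,3,1,4], [5,2,3,1,4], [5,3,2,1,4], [3,5,2,1,4], [3,2,5,1,4],
    [3,2,1,5,4], [3,2,1,4,5], [3,1,2,4,5], [3,1,2,5,4], [3,1,5,2,4], [3,5,1,2,4],
    [5,3,1,2,4], [5,1,3,2,4], [1,5,3,2,4], [1,3,5,2,4], [1,3,2,5,4], [1,3,2,4,5],
    [1,3,4,2,5], [1,3,4,5,2], [1,3,5,4,2], [1,5,3,4,2], [5,1,3,4,2], [5,3,1,4,2],
    [3,5,1,4,2], [3,1,5,4,2], [3,1,4,5,2], [3,1,4,2,5], [3,4,1,2,5], [3,4,1,5,2],
    [3,4,5,1,2], [3,4,5,2,1], [3,4,2,5,1], [3,4,2,1,5], [3,2,4,1,5], [2,3,4,1,5],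
    [2,3,4,5,1], [3,2,4,5,1], [3,2,5,4,1], [2,3,5,4,1], [2,5,3,4,1], [5,2,3,4,1],
    [5,3,2,4,1], [3,5,2,4,1], [3,5,4,2,1], [3,5,4,1,2], [5,3,4,1,2], [5,3,4,2,1],
    [5,4,3,2,1], [4,5,3,2,1], [4,3,5,2,1], [4,3,2,5,1], [4,3,2,1,5], [4,3,1,2,5],
    [4,3,1,5,2], [4,3,5,1,2], [4,5,3,1,2], [5,4,3,1,2], [5,4,1,3,2], [4,5,1,3,2],
    [4,1,5,3,2], [4,1,3,5,2], [4,1,3,2,5], [4,1,2,3,5], [4,1,2,5,3], [4,1,5,2,3],
    [4,5,1,2,3], [5,4,1,2,3], [5,4,2,1,3], [4,5,2,1,3], [4,2,5,1,3], [4,2,1,5,3],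
    [4,2,1,3,5], [4,2,3,1,5], [4,2,3,5,1], [4,2,5,3,1], [4,5,2,3,1], [5,4,2,3,1],
    [5,2,4,3,1], [2,5,4,3,1], [2,4,5,3,1], [2,4,3,5,1], [2,4,3,1,5], [2,4,1,3,5],
    [2,4,1,5,3], [2,4,5,1,3], [2,5,4,1,3], [5,2,4,1,3], [5,2,1,4,3], [2,5,1,4,3],
    [2,1,5,4,3], [1,2,5,4,3], [1,5,2,4,3], [5,1,2,4,3], [5,1,4,2,3], [5,1,4,3,2],
    [1,5,4,3,2], [1,5,4,2,3], [1,4,5,2,3], [1,4,5,3,2], [1,4,3,5,2], [1,4,3,2,5],
    [1,4,2,3,5], [1,4,2,5,3], [1,2,4,5,3], [2,1,4,5,3], [2,1,4,3,5], [1,2,4,3,5]]"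

lemma reverse_adj_gray_code_small: "1 \<le> n \<Longrightarrow> n \<le> 5 \<Longrightarrow> \<exists>L. reverse_adj_gray_code n L"
proof -
  assume "1 \<le> n" "n \<le> 5"
  then consider "n = 1" | "n = 2" | "n = 3" | "n = 4" | "n = 5"
    by linarith
  then show ?thesis
  proof cases
    case 1
    have "reverse_adj_gray_code 1 [[1]]"
      by (rule reverse_adj_gray_code_by_check) code_simp+
    with 1 show ?thesis by blast
  next
    case 2
    have "reverse_adj_gray_code 2 [[1, 2], [2, 1]]"
      by (rule reverse_adj_gray_code_by_check) code_simp+
    with 2 show ?thesis by blast
  next
    case 3
    have "reverse_adj_gray_code 3 [[1,2,3], [1,3,2], [3,1,2], [3,2,1], [2,3,1], [2,1,3]]"
      by (rule reverse_adj_gray_code_by_check) code_simp+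
    with 3 show ?thesis by blast
  next
    case 4
    have "reverse_adj_gray_code 4 listing4"
      unfolding listing4_def by (rule reverse_adj_gray_code_by_check) code_simp+
    with 4 show ?thesis by blast
  next
    case 5
    have "reverse_adj_gray_code 5 listing5"
      unfolding listing5_def by (rule reverse_adj_gray_code_by_check) code_simp+
    with 5 show ?thesis by blast
  qed
qed

section \<open>The parity obstruction\<close>

fun inversions :: "nat list \<Rightarrow> nat" where
  "inversions [] = 0"
| "inversions (x # xs) = length (filter (\<lambda>y. y < x) xs) + inversions xs"

lemma odd_inversions_adj_swap:
  "Suc j < length w \<Longrightarrow> w ! j \<noteq> w ! Suc j \<Longrightarrow> odd (inversions (adj_swap j w) + inversions w)"
proof (induction w arbitrary: j)
  case (Cons x w)
  show ?case
  proof (cases j)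
    case 0
    with Cons.prems obtain y w' where "w = y # w'" "x \<noteq> y"
      by (cases w) auto
    with 0 show ?thesis
      by auto
  next
    case (Suc j')
    with Cons.prems have "Suc j' < length w" "w ! j' \<noteq> w ! Suc j'"
      by auto
    moreover have "length (filter (\<lambda>y. y < x) (adj_swap j' w)) = length (filter (\<lambda>y. y < x) w)"
      using mset_adj_swap[OF \<open>Suc j' < length w\<close>] by (metis mset_filter size_mset)
    ultimately show ?thesis
      using Suc Cons.IH by simp
  qed
qed simp

lemma inversions_snoc: "inversions (xs @ [x]) = inversions xs + length (filter (\<lambda>y. x < y) xs)"
  by (induction xs) auto

text \<open>Every pair of distinct letters is an inversion of exactly one of \<open>w\<close> and \<open>rev w\<close>.\<close>

lemma inversions_rev:
  "distinct w \<Longrightarrow> 2 * (inversions (rev w) + inversions w) = length w * (length w - 1)"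
proof (induction w)
  case (Cons x w)
  have "length (filter (\<lambda>y. y < x) w) + length (filter (\<lambda>y. \<not> y < x) w) = length w"
    by (rule sum_length_filter_compl)
  moreover have "filter (\<lambda>y. \<not> y < x) w = filter (\<lambda>y. x < y) w"
  proof (rule filter_cong[OF refl])
    fix y
    assume "y \<in> set w"
    then have "y \<noteq> x"
      using Cons.prems by auto
    then show "(\<not> y < x) = (x < y)"
      by auto
  qed
  ultimately have "length (filter (\<lambda>y. y < x) w) + length (filter (\<lambda>y. x < y) (rev w)) = length w"
    by (simp flip: rev_filter)
  then have "2 * (inversions (rev (x # w)) + inversions (x # w)) =
      2 * (inversions (rev w) + inversions w) + 2 * length w"
    by (simp add: inversions_snoc)
  also have "\<dots> = length w * (length w - 1) + 2 * length w"
    using Cons by simp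
  also have "\<dots> = length (x # w) * (length (x # w) - 1)"
    by (cases w) (auto simp: algebra_simps)
  finally show ?case .
qed simp

lemma even_inversions_successively:
  assumes "successively adj_interchange L" "\<forall>w\<in>set L. distinct w" "k < length L"
  shows "even (inversions (L ! k) + inversions (L ! 0) + k)"
  using assms(3)
proof (induction k)
  case (Suc k)
  obtain j where j: "Suc j < length (L ! k)" "L ! Suc k = adj_swap j (L ! k)"
    using successively_nth[OF assms(1) Suc.prems] unfolding adj_interchange_def by blast
  have "distinct (L ! k)"
    using assms(2) Suc.prems by simp
  then have "L ! k ! j \<noteq> L ! k ! Suc j"
    using j(1) by (simp add: nth_eq_iff_index_eq)
  then have "odd (inversions (L ! Suc k) + inversions (L ! k))"
    using odd_inversions_adj_swap[OF j(1)] j(2) by simp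
  with Suc show ?case
    by presburger
qed simp

lemma four_dvd_mult_pred_iff:
  fixes n :: nat
  shows "4 dvd n * (n - 1) \<longleftrightarrow> n mod 4 = 0 \<or> n mod 4 = 1"
proof (cases n)
  case (Suc k)
  have prod: "Suc k * k mod 4 = (Suc k mod 4) * (k mod 4) mod 4"
    by (simp only: mod_mult_eq)
  have suc: "Suc k mod 4 = Suc (k mod 4) mod 4"
    by (simp only: mod_Suc_eq)
  consider "k mod 4 = 0" | "k mod 4 = 1" | "k mod 4 = 2" | "k mod 4 = 3"
    by linarith
  then show ?thesis
    using Suc prod suc by cases (simp_all add: dvd_eq_mod_eq_0)
qed simp

lemma reverse_adj_gray_code_mod_4:
  assumes L: "reverse_adj_gray_code n L" and "4 \<le> n"
  shows "n mod 4 = 0 \<or> n mod 4 = 1"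
proof -
  define h :: nat where "h = fact n div 2"
  have "(4::nat) dvd fact n"
    using assms(2) by (simp add: dvd_fact)
  then have h: "even h" "0 < h" "h < fact n"
    using fact_gt_zero[where 'a = nat, of n] unfolding h_def by presburger+
  have gL: "gray_code (mset_set {1..n}) L" and sym: "L ! h = rev (L ! 0)"
    using L h unfolding h_def reverse_adj_gray_code_iff by auto
  have len: "length L = fact n"
    using L by (simp add: reverse_adj_gray_code_def)
  have words: "mset w = mset_set {1..n}" if "w \<in> set L" for w
    using gL that by (simp add: gray_code_def permutations_of_multiset_def)
  then have dist: "\<forall>w\<in>set L. distinct w"
    by (metis finite_atLeastAtMost mset_eq_mset_set_imp_distinct)
  have w0: "L ! 0 \<in> set L"
    using h len by simp
  then have len0: "length (L ! 0) = n"
    using words by (metis size_mset size_mset_set card_atLeastAtMost diff_Suc_1)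
  have "even (inversions (rev (L ! 0)) + inversions (L ! 0))"
    using even_inversions_successively[OF _ dist, of h] gL h sym len
    by (simp add: gray_code_def)
  then obtain k where "inversions (rev (L ! 0)) + inversions (L ! 0) = 2 * k"
    by (rule evenE)
  then have "n * (n - 1) = 4 * k"
    using inversions_rev[of "L ! 0"] dist w0 len0 by simp
  then show ?thesis
    by (metis dvd_triv_left four_dvd_mult_pred_iff)
qed

lemma reverse_adj_gray_code_exists:
  "1 \<le> n \<Longrightarrow> n \<le> 5 \<or> n mod 4 = 0 \<or> n mod 4 = 1 \<Longrightarrow> \<exists>L. reverse_adj_gray_code n L"
proof (induction n rule: less_induct)
  case (less n)
  show ?case
  proof (cases "n \<le> 5")
    case True
    with less.prems show ?thesis
      by (intro reverse_adj_gray_code_small)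
  next
    case False
    define r :: nat where "r = (if n mod 4 = 0 then 4 else 5)"
    have m: "4 \<le> n - r" "(n - r) mod 4 = 0" "n - r < n"
      using False less.prems unfolding r_def by presburger+
    then obtain B where B: "reverse_adj_gray_code (n - r) B"
      using less.IH by fastforce
    have "even (n - r)"
      using m(2) by presburger
    then show ?thesis
      using reverse_adj_gray_code_add_four[OF B m(1)] reverse_adj_gray_code_add_five[OF B m(1)] m(1)
      by (auto simp: r_def split: if_splits)
  qed
qed

theorem theorem7:
  fixes n :: nat
  assumes "n \<ge> 1"
  shows "(\<exists>L. reverse_adj_gray_code n L) \<longleftrightarrow> (n \<le> 4 \<or> n mod 4 = 0 \<or> n mod 4 = 1)"
proof
  assume "\<exists>L. reverse_adj_gray_code n L"
  then obtain L where L: "reverse_adj_gray_code n L" ..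
  show "n \<le> 4 \<or> n mod 4 = 0 \<or> n mod 4 = 1"
  proof (cases "n \<le> 4")
    case False
    then show ?thesis
      using reverse_adj_gray_code_mod_4[OF L] by simp
  qed simp
next
  assume "n \<le> 4 \<or> n mod 4 = 0 \<or> n mod 4 = 1"
  then show "\<exists>L. reverse_adj_gray_code n L"
    using reverse_adj_gray_code_exists assms by auto
qed

end
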